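(* Let $L$ be an infinite set and consider the edged cube $\bar Q_L$. Let $f$ be a legal configuration accessible from $f_{\mathrm{solved}}$. Then for each pair $\gamma,\gamma'$ of colors and each cluster $C$ consisting of edge cells, other than the corner cluster, there is at most one pair of coupled edge cells $c,c'$ with $c\in C$, $f(c)=\gamma$ and $f(c')=\gamma'$. Similarly, for each triple $\gamma,\gamma',\gamma''$ of colors, there is at most one triple of mutually coupled corner cells whose colors under $f$ are $\gamma,\gamma',\gamma''$.
   Context: Let $L$ be an infinite set, $-L=\{-r:r\in L\}$ a disjoint copy of $L$, and $0$ a new element; $L^\dagger=-L\cup\{0\}\cup L$ with $-(-r)=r$, $-0=0$. Adjoin $\pm\infty$ with $-(+\infty)=-\infty$ and set $\bar L^\dagger=L^\dagger\cup\{\pm\infty\}$. Points of $U=(\bar L^\dagger)^3$ have coordinates $x,y,z$. The edged cube $\bar Q_L$ is the set of cells $(p,i)$ with $p\in U$, $i\in\{x,y,z\}$, $p_i\in\{\pm\infty\}$ ($i$ marks the face of the cell). Cells whose point has exactly two (resp. three) coordinates in $\{\pm\infty\}$ are edge (resp. corner) cells; distinct cells with the same underlying point are coupled (two coupled cells at each edge point, three mutually coupled cells at each corner point). For $i\in\{x,y,z\}$, $\alpha\in\bar L^\dagger$, the quarter-turn twist $T_{i,\alpha}$ is the permutation of cells fixing every cell whose point $p$ has $p_i\ne\alpha$ and acting on the others by the rotation $T_{x,\alpha}(\alpha,y,z)=(\alpha,-z,y)$, $T_{y,\alpha}(x,\alpha,z)=(z,\alpha,-x)$, $T_{z,\alpha}(x,y,\alpha)=(-y,x,\alpha)$,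 the marked coordinate being carried along by the rotation. Basic twists are $T,T^2,T^3$ for quarter-turn twists $T$. A basic sequence is a sequence $\langle\sigma_\eta:\eta<\theta\rangle$ of basic twists of ordinal length $\theta$. A configuration is a map $f$ from cells to the six colors red, white, green, orange, yellow, blue together with a special value NaC; it is legal if it never takes value NaC. The solved configuration $f_{\mathrm{solved}}$ colors cell $(p,i)$ red, blue, white, orange, green, yellow according as $p_i=+\infty$ with $i=x,y,z$, or $p_i=-\infty$ with $i=x,y,z$. A twist $\sigma$ acts by $(\sigma f)(c)=f(\sigma^{-1}c)$. Applying $\langle\sigma_\eta:\eta<\theta\rangle$ to $f_0$ produces $f_{\eta+1}=\sigma_\eta f_\eta$, and for limit $\lambda\le\theta$, $f_\lambda(c)$ is the eventually constant value of $f_\eta(c)$ ($\eta<\lambda$) if it exists and NaC otherwise; $f_\theta$ is the terminal configuration. $f$ is accessible from $f_0$ if it is the terminal configuration of some basic sequence applied to $f_0$. The cluster of a cell is its orbit under the group generated by all quarter-turn twists; the corner cluster is the set of all corner cells. *)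

theory Defs
  imports Main
begin

text \<open>Elements of the extended set: Neg r = -r, Zero = 0, Pos r = r, PInf = +infinity, NInf = -infinity.\<close>
datatype 'l coord = Neg 'l | Zero | Pos 'l | PInf | NInf

fun cneg :: "'l coord \<Rightarrow> 'l coord" where
  "cneg (Neg r) = Pos r"
| "cneg (Pos r) = Neg r"
| "cneg Zero = Zero"
| "cneg PInf = NInf"
| "cneg NInf = PInf"

definition is_inf :: "'l coord \<Rightarrow> bool" where
  "is_inf a \<longleftrightarrow> a = PInf \<or> a = NInf"

datatype axis = AX | AY | AZ

type_synonym 'l point = "'l coord \<times> 'l coord \<times> 'l coord"
type_synonym 'l cell = "'l point \<times> axis"

fun coord_of :: "axis \<Rightarrow> 'l point \<Rightarrow> 'l coord" where
  "coord_of AX (x, y, z) = x"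
| "coord_of AY (x, y, z) = y"
| "coord_of AZ (x, y, z) = z"

definition is_cell :: "'l cell \<Rightarrow> bool" where
  "is_cell c \<longleftrightarrow> is_inf (coord_of (snd c) (fst c))"

definition num_inf :: "'l point \<Rightarrow> nat" where
  "num_inf p = card {i. is_inf (coord_of i p)}"

definition edge_cell :: "'l cell \<Rightarrow> bool" where
  "edge_cell c \<longleftrightarrow> is_cell c \<and> num_inf (fst c) = 2"

definition corner_cell :: "'l cell \<Rightarrow> bool" where
  "corner_cell c \<longleftrightarrow> is_cell c \<and> num_inf (fst c) = 3"

definition coupled :: "'l cell \<Rightarrow> 'l cell \<Rightarrow> bool" where
  "coupled c c' \<longleftrightarrow> is_cell c \<and> is_cell c' \<and> c \<noteq> c' \<and> fst c = fst c'"

definition corner_cluster :: "'l cell set" where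
  "corner_cluster = {c. corner_cell c}"

fun swap_yz :: "axis \<Rightarrow> axis" where
  "swap_yz AX = AX" | "swap_yz AY = AZ" | "swap_yz AZ = AY"
fun swap_xz :: "axis \<Rightarrow> axis" where
  "swap_xz AX = AZ" | "swap_xz AY = AY" | "swap_xz AZ = AX"
fun swap_xy :: "axis \<Rightarrow> axis" where
  "swap_xy AX = AY" | "swap_xy AY = AX" | "swap_xy AZ = AZ"

text \<open>Quarter-turn twist T_{i,alpha}; the marked coordinate is carried along.\<close>
fun qturn :: "axis \<Rightarrow> 'l coord \<Rightarrow> 'l cell \<Rightarrow> 'l cell" where
  "qturn AX a ((x, y, z), i) =
     (if x \<noteq> a then ((x, y, z), i) else ((a, cneg z, y), swap_yz i))"
| "qturn AY a ((x, y, z), i) =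
     (if y \<noteq> a then ((x, y, z), i) else ((z, a, cneg x), swap_xz i))"
| "qturn AZ a ((x, y, z), i) =
     (if z \<noteq> a then ((x, y, z), i) else ((cneg y, x, a), swap_xy i))"

inductive_set cluster :: "'l cell \<Rightarrow> 'l cell set" for c :: "'l cell" where
  base: "c \<in> cluster c"
| fwd: "d \<in> cluster c \<Longrightarrow> qturn i a d \<in> cluster c"
| bwd: "d \<in> cluster c \<Longrightarrow> inv (qturn i a) d \<in> cluster c"

datatype color = Red | White | Green | Orange | Yellow | Blue

datatype cval = Col color | NaC

type_synonym 'l config = "'l cell \<Rightarrow> cval"

definition legal :: "'l config \<Rightarrow> bool" where
  "legal f \<longleftrightarrow> (\<forall>c. is_cell c \<longrightarrow> f c \<noteq> NaC)"

definition f_solved :: "'l config" where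
  "f_solved c = (let p = fst c; i = snd c in
     if coord_of i p = PInf then
       (case i of AX \<Rightarrow> Col Red | AY \<Rightarrow> Col Blue | AZ \<Rightarrow> Col White)
     else if coord_of i p = NInf then
       (case i of AX \<Rightarrow> Col Orange | AY \<Rightarrow> Col Green | AZ \<Rightarrow> Col Yellow)
     else NaC)"

type_synonym 'l btwist = "axis \<times> 'l coord \<times> nat"

definition basic_twist :: "'l btwist \<Rightarrow> bool" where
  "basic_twist s \<longleftrightarrow> (case s of (i, a, k) \<Rightarrow> k \<in> {1, 2, 3})"

definition twist_perm :: "'l btwist \<Rightarrow> 'l cell \<Rightarrow> 'l cell" where
  "twist_perm s = (case s of (i, a, k) \<Rightarrow> qturn i a ^^ k)"

definition act :: "'l btwist \<Rightarrow> 'l config \<Rightarrow> 'l config" where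
  "act s f = (\<lambda>c. f (inv (twist_perm s) c))"

definition lim_config :: "('o::wellorder \<Rightarrow> 'l config) \<Rightarrow> 'o \<Rightarrow> 'l config" where
  "lim_config F lam c =
     (if \<exists>v e0. e0 < lam \<and> (\<forall>e. e0 \<le> e \<and> e < lam \<longrightarrow> F e c = v)
      then (THE v. \<exists>e0. e0 < lam \<and> (\<forall>e. e0 \<le> e \<and> e < lam \<longrightarrow> F e c = v))
      else NaC)"

text \<open>A basic sequence of ordinal length theta is modelled by indices e < theta
  in a well-ordered type; F is the run of configurations f_e, e <= theta,
  obtained by applying the sequence sigma to f0.\<close>
definition is_run ::
  "'l config \<Rightarrow> ('o::wellorder \<Rightarrow> 'l btwist) \<Rightarrow> 'o \<Rightarrow> ('o \<Rightarrow> 'l config) \<Rightarrow> bool" where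
  "is_run f0 sigma theta F \<longleftrightarrow>
     (\<forall>e. e < theta \<longrightarrow> basic_twist (sigma e)) \<and>
     (\<forall>x. x \<le> theta \<longrightarrow>
        ((\<not> (\<exists>e. e < x)) \<longrightarrow> F x = f0) \<and>
        (\<forall>e. e < x \<and> \<not> (\<exists>m. e < m \<and> m < x) \<longrightarrow> F x = act (sigma e) (F e)) \<and>
        ((\<exists>e. e < x) \<and> (\<forall>e. e < x \<longrightarrow> (\<exists>m. e < m \<and> m < x)) \<longrightarrow> F x = lim_config F x))"

end

theory Submission
  imports Defs
begin

(* Both claims say that certain tuples of cells -- a coupled pair of edge cells in a fixed
   cluster, or a triple of mutually coupled corner cells -- are determined by their colours
   as long as none of these is NaC.  This holds for the solved cube: the colour of a cell
   determines its face and the sign of the infinite coordinate there, so the colours of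
   coupled cells determine the infinite coordinates of their common point; for edge cells
   the remaining finite coordinate is recovered from the cluster through a twist-invariant
   signed version of it.  Twists permute the cells preserving clusters, coupling and cell
   types, so they preserve the property, and at a limit stage the finitely many cells
   involved already carry their limit colours at some earlier stage.  Transfinite induction
   along the run concludes. *)

lemma cneg_cneg [simp]: "cneg (cneg a) = a"
  by (cases a) auto

lemma cneg_eq_cneg_iff [simp]: "cneg a = cneg b \<longleftrightarrow> a = b"
  by (metis cneg_cneg)

lemma is_inf_cneg [simp]: "is_inf (cneg a) = is_inf a"
  by (cases a) (auto simp: is_inf_def)

lemma swap_axis_involutions [simp]:
  "swap_yz (swap_yz i) = i" "swap_xz (swap_xz i) = i" "swap_xy (swap_xy i) = i"
  by (cases i; simp)+

lemma qturn_funpow_4: "qturn i a ^^ 4 = id"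
  by (rule ext, cases i) (auto simp: numeral_eq_Suc)

lemma inv_qturn_funpow: "inv (qturn i a ^^ k) = qturn i a ^^ (3 * k)"
proof (rule inv_unique_comp)
  have "qturn i a ^^ (4 * k) = id"
    by (simp add: funpow_mult[symmetric] qturn_funpow_4)
  then show "qturn i a ^^ k \<circ> qturn i a ^^ (3 * k) = id"
    and "qturn i a ^^ (3 * k) \<circ> qturn i a ^^ k = id"
    by (simp_all only: funpow_add[symmetric]) (simp_all add: add.commute)
qed

lemma inj_qturn: "inj (qturn i a)"
proof (rule inj_on_inverseI)
  fix c
  have "(qturn i a ^^ 3) (qturn i a c) = (qturn i a ^^ 4) c"
    by (simp add: numeral_eq_Suc)
  then show "(qturn i a ^^ 3) (qturn i a c) = c"
    by (simp add: qturn_funpow_4)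
qed

lemma cell_exhaust: obtains x y z m where "c = ((x, y, z), m)"
  by (metis surj_pair)

lemma num_inf_eq:
  "num_inf (x, y, z) = of_bool (is_inf x) + of_bool (is_inf y) + of_bool (is_inf z)"
proof -
  have "{i. is_inf (coord_of i (x, y, z))} =
      {i. i = AX \<and> is_inf x} \<union> {i. i = AY \<and> is_inf y} \<union> {i. i = AZ \<and> is_inf z}"
  proof (rule set_eqI)
    show "i \<in> {i. is_inf (coord_of i (x, y, z))} \<longleftrightarrow>
        i \<in> {i. i = AX \<and> is_inf x} \<union> {i. i = AY \<and> is_inf y} \<union> {i. i = AZ \<and> is_inf z}" for i
      by (cases i) auto
  qed
  then show ?thesis
    by (simp add: num_inf_def card_Un_disjoint)
qed

lemma fst_qturn_eq: "fst (qturn i a (p, m)) = fst (qturn i a (p, n))"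
  by (cases p rule: prod_cases3; cases i) auto

lemma is_cell_qturn [simp]: "is_cell (qturn i a c) = is_cell c"
proof (cases c rule: cell_exhaust)
  case (1 x y z m)
  then show ?thesis
    by (cases i; cases m) (auto simp: is_cell_def)
qed

lemma num_inf_qturn [simp]: "num_inf (fst (qturn i a c)) = num_inf (fst c)"
  by (cases c rule: cell_exhaust; cases i) (auto simp: num_inf_eq)

lemma edge_cell_qturn [simp]: "edge_cell (qturn i a c) = edge_cell c"
  by (simp add: edge_cell_def)

lemma corner_cell_qturn [simp]: "corner_cell (qturn i a c) = corner_cell c"
  by (simp add: corner_cell_def)

lemma coupled_qturn:
  assumes "coupled c d"
  shows "coupled (qturn i a c) (qturn i a d)"
proof -
  obtain p m n where "c = (p, m)" "d = (p, n)"
    using assms unfolding coupled_def by (metis prod.collapse)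
  with assms fst_qturn_eq[of i a p m n] show ?thesis
    by (auto simp: coupled_def inj_eq[OF inj_qturn])
qed

(* The finite coordinate of an edge cell, with a sign chosen from the face and the signs of
   the two infinite coordinates so that it is invariant under twists, hence constant on
   clusters. *)
fun edge_coord :: "'l cell \<Rightarrow> 'l coord" where
  "edge_coord ((x, y, z), m) =
     (if \<not> is_inf x then (if (m = AY) = (y = z) then x else cneg x)
      else if \<not> is_inf y then (if (m = AZ) = (z = x) then y else cneg y)
      else (if (m = AX) = (x = y) then z else cneg z))"

lemma inf_cneg_eq_iff_neq:
  assumes "is_inf a" "is_inf b"
  shows "cneg a = b \<longleftrightarrow> a \<noteq> b" "b = cneg a \<longleftrightarrow> a \<noteq> b"
  using assms by (auto simp: is_inf_def)

lemma edge_coord_qturn: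
  assumes "edge_cell c"
  shows "edge_coord (qturn i a c) = edge_coord c"
proof (cases c rule: cell_exhaust)
  case (1 x y z m)
  with assms show ?thesis
    by (cases i; cases m; cases "is_inf x"; cases "is_inf y"; cases "is_inf z")
       (auto simp: edge_cell_def is_cell_def num_inf_eq inf_cneg_eq_iff_neq)
qed

lemma edge_coord_cluster:
  assumes "c \<in> cluster c0" "edge_cell c0"
  shows "edge_cell c \<and> edge_coord c = edge_coord c0"
  using assms
proof (induction rule: cluster.induct)
  case base
  then show ?case by simp
next
  case (fwd d i a)
  then show ?case by (simp add: edge_coord_qturn)
next
  case (bwd d i a)
  have "inv (qturn i a) = qturn i a ^^ 3"
    using inv_qturn_funpow[where i = i and a = a and k = 1] by simp
  then have "inv (qturn i a) d = qturn i a (qturn i a (qturn i a d))"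
    by (simp add: numeral_eq_Suc)
  with bwd show ?case by (simp add: edge_coord_qturn)
qed

lemma f_solved_same_colour:
  assumes "f_solved (p, i) = f_solved (q, j)" "f_solved (p, i) \<noteq> NaC"
  shows "i = j \<and> coord_of i p = coord_of i q"
  using assms by (cases i; cases j) (auto simp: f_solved_def split: if_splits)

lemma edge_point_eqI:
  assumes "edge_cell (p, m)" "edge_cell (q, m)" "m' \<noteq> m" "is_inf (coord_of m' p)"
    and "coord_of m p = coord_of m q" "coord_of m' p = coord_of m' q"
    and "edge_coord (p, m) = edge_coord (q, m)"
  shows "p = q"
  using assms
  by (cases p rule: prod_cases3; cases q rule: prod_cases3; cases m; cases m')
     (auto simp: edge_cell_def is_cell_def num_inf_eq split: if_splits)

lemma point_eqI: "(\<And>i. coord_of i p = coord_of i q) \<Longrightarrow> p = q"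
  by (metis coord_of.simps prod_cases3)

lemma distinct_axes_cover: "(m1 :: axis) \<noteq> m2 \<Longrightarrow> m1 \<noteq> m3 \<Longrightarrow> m2 \<noteq> m3 \<Longrightarrow> i \<in> {m1, m2, m3}"
  by (cases i; cases m1; cases m2; cases m3) auto

(* Tuples containing NaC must be excluded: after a limit stage many cells may be NaC. *)
definition colour_injective_on :: "'l cell list set \<Rightarrow> 'l config \<Rightarrow> bool" where
  "colour_injective_on S f \<longleftrightarrow> inj_on (map f) {cs \<in> S. NaC \<notin> f ` set cs}"

lemma colour_injective_onD:
  assumes "colour_injective_on S f" "cs \<in> S" "ds \<in> S"
    and "map f cs = map f ds" "NaC \<notin> f ` set cs"
  shows "cs = ds"
proof -
  have "f ` set ds = f ` set cs"
    by (metis assms(4) list.set_map)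
  with assms show ?thesis
    unfolding colour_injective_on_def by (auto dest: inj_onD)
qed

lemma colour_injective_on_comp:
  assumes inj_f: "colour_injective_on S f" and "inj p" and closed: "map p ` S \<subseteq> S"
  shows "colour_injective_on S (f \<circ> p)"
  unfolding colour_injective_on_def
proof (rule inj_onI)
  fix cs ds
  assume "cs \<in> {cs \<in> S. NaC \<notin> (f \<circ> p) ` set cs}" "ds \<in> {cs \<in> S. NaC \<notin> (f \<circ> p) ` set cs}"
    and "map (f \<circ> p) cs = map (f \<circ> p) ds"
  then have "map p cs = map p ds"
    using colour_injective_onD[OF inj_f, of "map p cs" "map p ds"] closed
    by (auto simp: image_comp)
  then show "cs = ds"
    using \<open>inj p\<close> by (simp add: inj_map_eq_map)
qed

lemma lim_config_eventually_cell:
  fixes F :: "'o::wellorder \<Rightarrow> 'l config"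
  assumes "lim_config F x c \<noteq> NaC"
  shows "\<exists>e0<x. \<forall>e. e0 \<le> e \<and> e < x \<longrightarrow> F e c = lim_config F x c"
proof -
  let ?settles_at = "\<lambda>v. \<exists>e0<x. \<forall>e. e0 \<le> e \<and> e < x \<longrightarrow> F e c = v"
  have settles: "\<exists>v. ?settles_at v"
    using assms unfolding lim_config_def by (auto split: if_splits)
  then obtain v where v: "?settles_at v" ..
  have unique: "w = v" if w: "?settles_at w" for w
  proof -
    obtain e1 where "e1 < x" and w': "\<forall>e. e1 \<le> e \<and> e < x \<longrightarrow> F e c = w"
      using w by blast
    obtain e2 where "e2 < x" and v': "\<forall>e. e2 \<le> e \<and> e < x \<longrightarrow> F e c = v"
      using v by blast
    have "max e1 e2 < x"
      using \<open>e1 < x\<close> \<open>e2 < x\<close> by simp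
    then have "F (max e1 e2) c = w"
      using w' by simp
    moreover have "F (max e1 e2) c = v"
      using v' \<open>max e1 e2 < x\<close> by simp
    ultimately show "w = v" by simp
  qed
  have "lim_config F x c = (THE v. ?settles_at v)"
    using settles unfolding lim_config_def by (simp only: if_True)
  also have "\<dots> = v"
    using v unique by (rule the_equality)
  finally show ?thesis
    using v by simp
qed

lemma lim_config_eventually:
  fixes F :: "'o::wellorder \<Rightarrow> 'l config"
  assumes "finite A" "\<forall>c\<in>A. lim_config F x c \<noteq> NaC" "\<exists>e. e < x"
  shows "\<exists>e0<x. \<forall>e. e0 \<le> e \<and> e < x \<longrightarrow> (\<forall>c\<in>A. F e c = lim_config F x c)"
  using assms
proof (induction A rule: finite_induct)
  case empty
  then show ?case by auto
next
  case (insert c A)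
  then obtain e1 e2 where "e1 < x" "e2 < x"
    and A_settled: "\<forall>e. e1 \<le> e \<and> e < x \<longrightarrow> (\<forall>c\<in>A. F e c = lim_config F x c)"
    and c_settled: "\<forall>e. e2 \<le> e \<and> e < x \<longrightarrow> F e c = lim_config F x c"
    using lim_config_eventually_cell[of F x c] by auto
  then have "max e1 e2 < x"
    by simp
  with A_settled c_settled show ?case
    by (metis insert_iff max.bounded_iff)
qed

lemma colour_injective_on_lim_config:
  fixes F :: "'o::wellorder \<Rightarrow> 'l config"
  assumes "\<forall>e<x. colour_injective_on S (F e)" "\<exists>e. e < x"
  shows "colour_injective_on S (lim_config F x)"
  unfolding colour_injective_on_def
proof (rule inj_onI)
  fix cs ds
  assume cs: "cs \<in> {cs \<in> S. NaC \<notin> lim_config F x ` set cs}"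
    and ds: "ds \<in> {cs \<in> S. NaC \<notin> lim_config F x ` set cs}"
    and eq: "map (lim_config F x) cs = map (lim_config F x) ds"
  have "\<forall>c\<in>set cs \<union> set ds. lim_config F x c \<noteq> NaC"
    using cs ds by force
  then obtain e where "e < x" and agree: "\<forall>c\<in>set cs \<union> set ds. F e c = lim_config F x c"
    using lim_config_eventually[of "set cs \<union> set ds" F x] assms(2) by auto
  then have "map (F e) cs = map (lim_config F x) cs" "map (F e) ds = map (lim_config F x) ds"
    by (auto intro: map_cong)
  with cs ds eq agree show "cs = ds"
    using colour_injective_onD[of S "F e" cs ds] assms(1) \<open>e < x\<close> by auto
qed

lemma is_run_induct:
  fixes F :: "'o::wellorder \<Rightarrow> 'l config"
  assumes run: "is_run f0 sigma theta F" and "x \<le> theta"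
    and init: "P f0"
    and step: "\<And>s f. basic_twist s \<Longrightarrow> P f \<Longrightarrow> P (act s f)"
    and lim: "\<And>y. \<exists>e. e < y \<Longrightarrow> \<forall>e<y. P (F e) \<Longrightarrow> P (lim_config F y)"
  shows "P (F x)"
  using \<open>x \<le> theta\<close>
proof (induction x rule: less_induct)
  case (less x)
  note stages = run[unfolded is_run_def, THEN conjunct2, rule_format, OF less.prems]
  have IH: "P (F e)" if "e < x" for e
    using less that by simp
  consider (initial) "\<not> (\<exists>e. e < x)"
    | (successor) e where "e < x" "\<not> (\<exists>m. e < m \<and> m < x)"
    | (limit) "\<exists>e. e < x" "\<forall>e. e < x \<longrightarrow> (\<exists>m. e < m \<and> m < x)"
    by blast
  then show ?case
  proof cases
    case initial
    then show ?thesis using stages init by simp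
  next
    case successor
    moreover have "basic_twist (sigma e)"
      using run less.prems successor(1) unfolding is_run_def by auto
    ultimately show ?thesis using stages step IH by simp
  next
    case limit
    then show ?thesis using stages lim IH by simp
  qed
qed

lemma map_funpow_closed:
  assumes "map p ` S \<subseteq> S"
  shows "map (p ^^ n) ` S \<subseteq> S"
proof (induction n)
  case 0
  then show ?case by simp
next
  case (Suc n)
  have "map (p ^^ Suc n) ` S = map p ` map (p ^^ n) ` S"
    by (simp only: funpow.simps(2) map_map image_image)
  also have "\<dots> \<subseteq> S"
    using Suc assms by blast
  finally show ?case .
qed

lemma colour_injective_on_run:
  fixes F :: "'o::wellorder \<Rightarrow> 'l config"
  assumes run: "is_run f0 sigma theta F" and "x \<le> theta"
    and init: "colour_injective_on S f0"
    and closed: "\<And>i a. map (qturn i a) ` S \<subseteq> S"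
  shows "colour_injective_on S (F x)"
  using run \<open>x \<le> theta\<close> init
proof (rule is_run_induct)
  fix s :: "'l btwist" and f :: "'l config"
  assume "colour_injective_on S f"
  obtain i a k where s: "s = (i, a, k)"
    by (cases s)
  have "colour_injective_on S (f \<circ> qturn i a ^^ (3 * k))"
    by (rule colour_injective_on_comp[OF \<open>colour_injective_on S f\<close> inj_fn[OF inj_qturn]
          map_funpow_closed[OF closed]])
  moreover have "act s f = f \<circ> qturn i a ^^ (3 * k)"
    by (simp add: s act_def twist_perm_def inv_qturn_funpow comp_def)
  ultimately show "colour_injective_on S (act s f)"
    by simp
next
  fix y :: 'o
  assume "\<exists>e. e < y" "\<forall>e<y. colour_injective_on S (F e)"
  then show "colour_injective_on S (lim_config F y)"
    by (rule colour_injective_on_lim_config[rotated])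
qed

definition coupled_edge_pairs :: "'l cell \<Rightarrow> 'l cell list set" where
  "coupled_edge_pairs c0 = {[c, c'] | c c'. c \<in> cluster c0 \<and> edge_cell c \<and> coupled c c'}"

definition coupled_corner_triples :: "'l cell list set" where
  "coupled_corner_triples =
     {[c, c', c''] | c c' c''. corner_cell c \<and> coupled c c' \<and> coupled c c'' \<and> coupled c' c''}"

lemma coupled_cellsD:
  assumes "coupled (p, m) (q, n)"
  shows "q = p" "m \<noteq> n" "is_inf (coord_of n p)"
  using assms by (auto simp: coupled_def is_cell_def)

lemma coupled_edge_pairsI:
  "c \<in> cluster c0 \<Longrightarrow> edge_cell c \<Longrightarrow> coupled c c' \<Longrightarrow> [c, c'] \<in> coupled_edge_pairs c0"
  unfolding coupled_edge_pairs_def by blast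

lemma coupled_corner_triplesI:
  "corner_cell c \<Longrightarrow> coupled c c' \<Longrightarrow> coupled c c'' \<Longrightarrow> coupled c' c'' \<Longrightarrow>
    [c, c', c''] \<in> coupled_corner_triples"
  unfolding coupled_corner_triples_def by blast

lemma coupled_edge_pairsE:
  assumes "cs \<in> coupled_edge_pairs c0"
  obtains p m m' where "cs = [(p, m), (p, m')]" "(p, m) \<in> cluster c0" "edge_cell (p, m)"
    "m \<noteq> m'" "is_inf (coord_of m' p)"
proof -
  obtain p m q m' where "cs = [(p, m), (q, m')]" "(p, m) \<in> cluster c0" "edge_cell (p, m)"
    "coupled (p, m) (q, m')"
    using assms unfolding coupled_edge_pairs_def by auto
  with coupled_cellsD[of p m q m'] that show thesis
    by simp
qed

lemma coupled_corner_triplesE: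
  assumes "cs \<in> coupled_corner_triples"
  obtains p m m' m'' where "cs = [(p, m), (p, m'), (p, m'')]" "m \<noteq> m'" "m \<noteq> m''" "m' \<noteq> m''"
proof -
  obtain p m q m' r m'' where "cs = [(p, m), (q, m'), (r, m'')]"
    "coupled (p, m) (q, m')" "coupled (p, m) (r, m'')" "coupled (q, m') (r, m'')"
    using assms unfolding coupled_corner_triples_def by auto
  with coupled_cellsD that show thesis
    by metis
qed

lemma coupled_edge_pairs_qturn: "map (qturn i a) ` coupled_edge_pairs c0 \<subseteq> coupled_edge_pairs c0"
proof (rule image_subsetI)
  fix cs
  assume "cs \<in> coupled_edge_pairs c0"
  then obtain c c' where "cs = [c, c']" "c \<in> cluster c0" "edge_cell c" "coupled c c'"
    unfolding coupled_edge_pairs_def by blast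
  then show "map (qturn i a) cs \<in> coupled_edge_pairs c0"
    by (simp add: coupled_edge_pairsI cluster.fwd coupled_qturn)
qed

lemma coupled_corner_triples_qturn:
  "map (qturn i a) ` coupled_corner_triples \<subseteq> (coupled_corner_triples :: 'l cell list set)"
proof (rule image_subsetI)
  fix cs :: "'l cell list"
  assume "cs \<in> coupled_corner_triples"
  then obtain c c' c'' where "cs = [c, c', c'']" "corner_cell c"
    "coupled c c'" "coupled c c''" "coupled c' c''"
    unfolding coupled_corner_triples_def by blast
  then show "map (qturn i a) cs \<in> coupled_corner_triples"
    by (simp add: coupled_corner_triplesI coupled_qturn)
qed

lemma colour_injective_on_solved_edge_pairs:
  assumes "edge_cell c0"
  shows "colour_injective_on (coupled_edge_pairs c0) f_solved"
  unfolding colour_injective_on_def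
proof (rule inj_onI)
  fix cs ds
  assume cs: "cs \<in> {cs \<in> coupled_edge_pairs c0. NaC \<notin> f_solved ` set cs}"
    and ds: "ds \<in> {cs \<in> coupled_edge_pairs c0. NaC \<notin> f_solved ` set cs}"
    and colours: "map f_solved cs = map f_solved ds"
  obtain p m m' where cs_eq: "cs = [(p, m), (p, m')]" "(p, m) \<in> cluster c0" "edge_cell (p, m)"
    "m \<noteq> m'" "is_inf (coord_of m' p)"
    using cs by (auto elim: coupled_edge_pairsE)
  obtain q n n' where ds_eq: "ds = [(q, n), (q, n')]" "(q, n) \<in> cluster c0" "edge_cell (q, n)"
    using ds by (auto elim: coupled_edge_pairsE)
  have "f_solved (p, m) = f_solved (q, n)" "f_solved (p, m') = f_solved (q, n')"
    using colours unfolding cs_eq ds_eq by simp_all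
  moreover have "f_solved (p, m) \<noteq> NaC" "f_solved (p, m') \<noteq> NaC"
    using cs unfolding cs_eq by auto
  ultimately have "m = n" "coord_of m p = coord_of m q" "m' = n'" "coord_of m' p = coord_of m' q"
    using f_solved_same_colour by blast+
  moreover have "edge_coord (p, m) = edge_coord (q, n)"
    using edge_coord_cluster assms cs_eq(2) ds_eq(2) by metis
  ultimately have "p = q"
    using edge_point_eqI[of p m q m'] cs_eq ds_eq by simp
  with \<open>m = n\<close> \<open>m' = n'\<close> show "cs = ds"
    unfolding cs_eq ds_eq by simp
qed

lemma colour_injective_on_solved_corner_triples:
  "colour_injective_on (coupled_corner_triples :: 'l cell list set) f_solved"
  unfolding colour_injective_on_def
proof (rule inj_onI)
  fix cs ds :: "'l cell list"
  assume cs: "cs \<in> {cs \<in> coupled_corner_triples. NaC \<notin> f_solved ` set cs}"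
    and ds: "ds \<in> {cs \<in> coupled_corner_triples. NaC \<notin> f_solved ` set cs}"
    and colours: "map f_solved cs = map f_solved ds"
  obtain p m m' m'' where cs_eq: "cs = [(p, m), (p, m'), (p, m'')]"
    "m \<noteq> m'" "m \<noteq> m''" "m' \<noteq> m''"
    using cs by (auto elim: coupled_corner_triplesE)
  obtain q n n' n'' where ds_eq: "ds = [(q, n), (q, n'), (q, n'')]"
    using ds by (auto elim: coupled_corner_triplesE)
  have "f_solved (p, m) = f_solved (q, n)" "f_solved (p, m') = f_solved (q, n')"
    "f_solved (p, m'') = f_solved (q, n'')"
    using colours unfolding cs_eq ds_eq by simp_all
  moreover have "f_solved (p, m) \<noteq> NaC" "f_solved (p, m') \<noteq> NaC" "f_solved (p, m'') \<noteq> NaC"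
    using cs unfolding cs_eq by auto
  ultimately have "m = n" "m' = n'" "m'' = n''" and
    coords: "coord_of m p = coord_of m q" "coord_of m' p = coord_of m' q" "coord_of m'' p = coord_of m'' q"
    using f_solved_same_colour by blast+
  moreover have "p = q"
  proof (rule point_eqI)
    show "coord_of i p = coord_of i q" for i
      using distinct_axes_cover[OF cs_eq(2-4), of i] coords by auto
  qed
  ultimately show "cs = ds"
    unfolding cs_eq ds_eq by simp
qed

theorem lemma4p1:
  fixes f :: "'l config"
    and sigma :: "'o::wellorder \<Rightarrow> 'l btwist"
    and theta :: 'o
    and F :: "'o \<Rightarrow> 'l config"
  assumes infL: "infinite (UNIV :: 'l set)"
    and run: "is_run f_solved sigma theta F"
    and termf: "F theta = f"
    and leg: "legal f"
  shows "(\<forall>(g1::color) g2 C c0.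
            is_cell c0 \<and> C = cluster c0 \<and> (\<forall>c\<in>C. edge_cell c) \<and> C \<noteq> corner_cluster \<longrightarrow>
            (\<forall>c1 c1' c2 c2'.
               c1 \<in> C \<and> edge_cell c1 \<and> edge_cell c1' \<and> coupled c1 c1' \<and>
               f c1 = Col g1 \<and> f c1' = Col g2 \<and>
               c2 \<in> C \<and> edge_cell c2 \<and> edge_cell c2' \<and> coupled c2 c2' \<and>
               f c2 = Col g1 \<and> f c2' = Col g2
               \<longrightarrow> c1 = c2 \<and> c1' = c2'))
       \<and> (\<forall>(g1::color) g2 g3.
            (\<forall>c1 c1' c1'' c2 c2' c2''.
               corner_cell c1 \<and> corner_cell c1' \<and> corner_cell c1'' \<and>
               coupled c1 c1' \<and> coupled c1 c1'' \<and> coupled c1' c1'' \<and>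
               f c1 = Col g1 \<and> f c1' = Col g2 \<and> f c1'' = Col g3 \<and>
               corner_cell c2 \<and> corner_cell c2' \<and> corner_cell c2'' \<and>
               coupled c2 c2' \<and> coupled c2 c2'' \<and> coupled c2' c2'' \<and>
               f c2 = Col g1 \<and> f c2' = Col g2 \<and> f c2'' = Col g3
               \<longrightarrow> c1 = c2 \<and> c1' = c2' \<and> c1'' = c2''))"
proof -
  have edges: "colour_injective_on (coupled_edge_pairs c0) f" if "edge_cell c0" for c0
    using colour_injective_on_run[OF run order_refl colour_injective_on_solved_edge_pairs[OF that]
        coupled_edge_pairs_qturn] termf by simp
  have corners: "colour_injective_on coupled_corner_triples f"
    using colour_injective_on_run[OF run order_refl colour_injective_on_solved_corner_triples
        coupled_corner_triples_qturn] termf by simp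
  show ?thesis
    apply (rule conjI; intro allI impI)
    subgoal for g1 g2 C c0 c1 c1' c2 c2'
      using colour_injective_onD[OF edges, of c0 "[c1, c1']" "[c2, c2']"]
      by (auto intro: cluster.base coupled_edge_pairsI)
    subgoal for g1 g2 g3 c1 c1' c1'' c2 c2' c2''
      using colour_injective_onD[OF corners, of "[c1, c1', c1'']" "[c2, c2', c2'']"]
      by (auto intro: coupled_corner_triplesI)
    done
qed

end
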